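(* Let $G$ be a graph without isolated vertices and $T$ a solution counting decision tree for $\varphi(G)$. Let $u$ be a node of $T$ labelled by a variable $x$ that is not forced to $1$ by $A_u$. Then the weight of the outgoing edge of $u$ labelled $\neg x$ is between $(1/2)^{|N^u(x)|+1}$ and $1/2$, and the weight of the outgoing edge of $u$ labelled $x$ is between $1/2$ and $1-(1/2)^{|N^u(x)|+1}$.
   Context: $\varphi(G)$ is the CNF on variables $V(G)$ with clauses $(u\vee v)$ for $\{u,v\}\in E(G)$. Boolean functions are identified with their sets of satisfying assignments (sets of literals); $F|_S$ is the function on the remaining variables whose satisfying assignments are the $S'$ with $S\cup S'$ satisfying $F$; $|\cdot|$ counts satisfying assignments. Decision tree for $F$ (not constant false): root labelled by some $x\in Var(F)$; for each literal $\ell\in\{x,\neg x\}$ occurring in some satisfying assignment, an outgoing edge labelled $\ell$ whose head is a leaf if $|Var(F)|=1$ and otherwise the root of a decision tree for $F|_\ell$. A solution counting decision tree additionally gives the edge leaving node $w$ with label $\ell$ the weight $|F|_{A_w\cup\{\ell\}}|/|F|_{A_w}|$, where $A_w$ is the set of literals labelling the root-$w$ path. A variable $y$ is forced to $1$ by $A_u$ if some neighbour $z$ of $y$ in $G$ has $\neg z\in A_u$. $N^u(y)$ is the set of neighbours $z$ of $y$ that do not occur in $A_u$ and are not forced to $1$ by $A_u$. *)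

theory Defs
  imports Complex_Main
begin

datatype 'a lit = Pos 'a | Neg 'a

fun lvar :: "'a lit \<Rightarrow> 'a" where
  "lvar (Pos x) = x" | "lvar (Neg x) = x"

definition litvars :: "'a lit set \<Rightarrow> 'a set" where
  "litvars S = lvar ` S"

definition is_assignment :: "'a set \<Rightarrow> 'a lit set \<Rightarrow> bool" where
  "is_assignment X S \<longleftrightarrow> litvars S \<subseteq> X \<and>
     (\<forall>x\<in>X. (Pos x \<in> S) \<noteq> (Neg x \<in> S))"

text \<open>A Boolean function: its variable set together with its set of
  satisfying assignments.\<close>
type_synonym 'a bfun = "'a set \<times> 'a lit set set"

definition Var :: "'a bfun \<Rightarrow> 'a set" where "Var F = fst F"
definition Sat :: "'a bfun \<Rightarrow> 'a lit set set" where "Sat F = snd F"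

definition restrict :: "'a bfun \<Rightarrow> 'a lit set \<Rightarrow> 'a bfun" where
  "restrict F S = (Var F - litvars S,
     {S'. is_assignment (Var F - litvars S) S' \<and> S \<union> S' \<in> Sat F})"

definition count :: "'a bfun \<Rightarrow> nat" where
  "count F = card (Sat F)"

definition simple_graph :: "'a set \<Rightarrow> 'a set set \<Rightarrow> bool" where
  "simple_graph V E \<longleftrightarrow> finite V \<and>
     (\<forall>e\<in>E. \<exists>u v. e = {u, v} \<and> u \<noteq> v \<and> u \<in> V \<and> v \<in> V)"

definition no_isolated :: "'a set \<Rightarrow> 'a set set \<Rightarrow> bool" where
  "no_isolated V E \<longleftrightarrow> (\<forall>v\<in>V. \<exists>e\<in>E. v \<in> e)"

definition phi :: "'a set \<Rightarrow> 'a set set \<Rightarrow> 'a bfun" where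
  "phi V E = (V, {S. is_assignment V S \<and> (\<forall>e\<in>E. \<exists>v\<in>e. Pos v \<in> S)})"

text \<open>Node x cp cn: node labelled by variable x; cp is the (optional) child
  along the edge labelled x, cn the (optional) child along the edge labelled
  \<not>x.  Leaf is a leaf.\<close>
datatype 'a dtree = Leaf | Node 'a "'a dtree option" "'a dtree option"

inductive is_dtree :: "'a bfun \<Rightarrow> 'a dtree \<Rightarrow> bool" where
  "\<lbrakk> Sat F \<noteq> {}; x \<in> Var F;
     cp \<noteq> None \<longleftrightarrow> (\<exists>S\<in>Sat F. Pos x \<in> S);
     cn \<noteq> None \<longleftrightarrow> (\<exists>S\<in>Sat F. Neg x \<in> S);
     \<forall>t. cp = Some t \<longrightarrow>
        (card (Var F) = 1 \<longrightarrow> t = Leaf) \<and>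
        (card (Var F) \<noteq> 1 \<longrightarrow> is_dtree (restrict F {Pos x}) t);
     \<forall>t. cn = Some t \<longrightarrow>
        (card (Var F) = 1 \<longrightarrow> t = Leaf) \<and>
        (card (Var F) \<noteq> 1 \<longrightarrow> is_dtree (restrict F {Neg x}) t) \<rbrakk>
   \<Longrightarrow> is_dtree F (Node x cp cn)"

text \<open>node_at T A w: w is (the subtree rooted at) a node of T reached from the
  root along a path whose edge labels form the literal set A (= A_w).\<close>
inductive node_at :: "'a dtree \<Rightarrow> 'a lit set \<Rightarrow> 'a dtree \<Rightarrow> bool" where
  root: "node_at T {} T"
| pos: "\<lbrakk> node_at T A (Node x cp cn); cp = Some t \<rbrakk> \<Longrightarrow> node_at T (A \<union> {Pos x}) t"
| neg: "\<lbrakk> node_at T A (Node x cp cn); cn = Some t \<rbrakk> \<Longrightarrow> node_at T (A \<union> {Neg x}) t"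

text \<open>Weight of the edge leaving a node w (with path literals A = A_w)
  labelled l, in the solution counting decision tree for F.\<close>
definition edge_weight :: "'a bfun \<Rightarrow> 'a lit set \<Rightarrow> 'a lit \<Rightarrow> real" where
  "edge_weight F A l = real (count (restrict F (A \<union> {l}))) / real (count (restrict F A))"

definition forced1 :: "'a set set \<Rightarrow> 'a lit set \<Rightarrow> 'a \<Rightarrow> bool" where
  "forced1 E A y \<longleftrightarrow> (\<exists>z. {y, z} \<in> E \<and> Neg z \<in> A)"

definition Nu :: "'a set set \<Rightarrow> 'a lit set \<Rightarrow> 'a \<Rightarrow> 'a set" where
  "Nu E A y = {z. {y, z} \<in> E \<and> z \<notin> litvars A \<and> \<not> forced1 E A z}"

end

theory Submission imports Defs begin

text \<open>Let P and N be the satisfying assignments of phi(G) restricted to A_u that set x to 1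
  and to 0.  Since phi(G) is monotone, setting x to 1 maps N injectively into P, so |N| \<le> |P|.
  Conversely, if x is set to 0, every neighbour of x must be 1; setting x to 0 and all of
  N^u(x) to 1 maps P into N, and since neighbours of x outside N^u(x) are already 1 (either
  fixed by A_u or forced), at most 2^|N^u(x)| elements of P share an image.  Hence
  |N| \<le> |P| \<le> 2^|N^u(x)| |N|, which gives the bounds on |N|/(|P| + |N|) and |P|/(|P| + |N|).\<close>

lemma litvars_simps [simp]:
  "litvars (A \<union> B) = litvars A \<union> litvars B"
  "litvars (insert l B) = insert (lvar l) (litvars B)"
  "litvars {} = {}"
  by (auto simp: litvars_def)

lemma is_assignment_lvar: "is_assignment W S \<Longrightarrow> l \<in> S \<Longrightarrow> lvar l \<in> W"
  unfolding is_assignment_def litvars_def by blast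

lemma is_assignment_Pos_neq_Neg:
  "is_assignment W S \<Longrightarrow> y \<in> W \<Longrightarrow> (Pos y \<in> S) \<noteq> (Neg y \<in> S)"
  unfolding is_assignment_def by blast

lemma is_assignment_eqI:
  assumes "is_assignment W S1" "is_assignment W S2"
    and "\<And>y. y \<in> W \<Longrightarrow> Pos y \<in> S1 \<longleftrightarrow> Pos y \<in> S2"
  shows "S1 = S2"
  using assms unfolding is_assignment_def litvars_def image_subset_iff
  by (metis lit.exhaust lvar.simps subsetI subset_antisym)

lemma is_assignment_insert:
  assumes "lvar l \<in> W" "is_assignment (W - {lvar l}) S"
  shows "is_assignment W (insert l S)"
proof -
  have vS: "\<forall>m\<in>S. lvar m \<in> W \<and> lvar m \<noteq> lvar l"
    using assms(2) unfolding is_assignment_def litvars_def by auto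
  have c: "\<forall>y\<in>W - {lvar l}. (Pos y \<in> S) \<noteq> (Neg y \<in> S)"
    using assms(2) unfolding is_assignment_def by auto
  show ?thesis unfolding is_assignment_def litvars_def
  proof (intro conjI ballI)
    show "lvar ` insert l S \<subseteq> W" using vS assms(1) by auto
    fix y assume "y \<in> W"
    then show "(Pos y \<in> insert l S) \<noteq> (Neg y \<in> insert l S)"
      using vS c by (cases "y = lvar l"; cases l) force+
  qed
qed

lemma is_assignment_remove:
  assumes "is_assignment W S" "l \<in> S"
  shows "is_assignment (W - {lvar l}) (S - {l})"
proof -
  have vS: "\<forall>m\<in>S. lvar m \<in> W" using assms(1) unfolding is_assignment_def litvars_def by auto
  have c: "\<forall>y\<in>W. (Pos y \<in> S) \<noteq> (Neg y \<in> S)" using assms(1) unfolding is_assignment_def by auto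
  have unique: "m = l" if "m \<in> S" "lvar m = lvar l" for m
  proof -
    have "lvar l \<in> W" using vS assms(2) by auto
    then show ?thesis using c that assms(2) by (cases m; cases l) auto
  qed
  show ?thesis unfolding is_assignment_def litvars_def
  proof (intro conjI ballI)
    show "lvar ` (S - {l}) \<subseteq> W - {lvar l}" using vS unique by auto
    fix y assume y: "y \<in> W - {lvar l}"
    then have "Pos y \<noteq> l" "Neg y \<noteq> l" by auto
    then show "(Pos y \<in> S - {l}) \<noteq> (Neg y \<in> S - {l})" using c y by auto
  qed
qed

lemma finite_assignments:
  assumes "finite W"
  shows "finite {S. is_assignment W S}"
proof -
  have "l \<in> Pos ` W \<union> Neg ` W" if "is_assignment W S" "l \<in> S" for S l
    using is_assignment_lvar[OF that] by (cases l) auto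
  then have "{S. is_assignment W S} \<subseteq> Pow (Pos ` W \<union> Neg ` W)" by blast
  then show ?thesis using assms by (simp add: finite_subset)
qed

lemma is_assignment_Un_cong:
  assumes S1: "is_assignment (V - litvars A) S1" and S2: "is_assignment (V - litvars A) S2"
    and AS1: "is_assignment V (A \<union> S1)"
  shows "is_assignment V (A \<union> S2)"
proof -
  have v1: "\<forall>m\<in>S1. lvar m \<in> V \<and> lvar m \<notin> litvars A" "\<forall>m\<in>S2. lvar m \<in> V \<and> lvar m \<notin> litvars A"
    using S1 S2 unfolding is_assignment_def litvars_def by auto
  have vA: "\<forall>m\<in>A. lvar m \<in> V" using AS1 unfolding is_assignment_def litvars_def by auto
  have c1: "\<forall>y\<in>V. (Pos y \<in> A \<union> S1) \<noteq> (Neg y \<in> A \<union> S1)"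
    using AS1 unfolding is_assignment_def by auto
  have c2: "\<forall>y\<in>V - litvars A. (Pos y \<in> S2) \<noteq> (Neg y \<in> S2)"
    using S2 unfolding is_assignment_def by auto
  show ?thesis unfolding is_assignment_def
  proof (intro conjI ballI)
    show "litvars (A \<union> S2) \<subseteq> V" using vA v1 unfolding litvars_def by auto
    fix y assume y: "y \<in> V"
    show "(Pos y \<in> A \<union> S2) \<noteq> (Neg y \<in> A \<union> S2)"
    proof (cases "y \<in> litvars A")
      case True
      then have "Pos y \<notin> S1" "Neg y \<notin> S1" "Pos y \<notin> S2" "Neg y \<notin> S2" using v1 by force+
      then show ?thesis using c1 y by auto
    next
      case False
      then have "Pos y \<notin> A" "Neg y \<notin> A" unfolding litvars_def by force+
      then show ?thesis using c2 y False by auto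
    qed
  qed
qed

definition set_true :: "'a set \<Rightarrow> 'a lit set \<Rightarrow> 'a lit set" where
  "set_true M S = (S - Neg ` M) \<union> Pos ` M"

definition set_false :: "'a set \<Rightarrow> 'a lit set \<Rightarrow> 'a lit set" where
  "set_false M S = (S - Pos ` M) \<union> Neg ` M"

lemma Pos_in_set_true [simp]: "Pos y \<in> set_true M S \<longleftrightarrow> y \<in> M \<or> Pos y \<in> S"
  by (auto simp: set_true_def)

lemma Pos_in_set_false [simp]: "Pos y \<in> set_false M S \<longleftrightarrow> y \<notin> M \<and> Pos y \<in> S"
  by (auto simp: set_false_def)

lemma Neg_in_set_false [simp]: "Neg y \<in> set_false M S \<longleftrightarrow> y \<in> M \<or> Neg y \<in> S"
  by (auto simp: set_false_def)

lemma is_assignment_set_true: "is_assignment W S \<Longrightarrow> M \<subseteq> W \<Longrightarrow> is_assignment W (set_true M S)"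
  unfolding is_assignment_def litvars_def set_true_def by auto

lemma is_assignment_set_false: "is_assignment W S \<Longrightarrow> M \<subseteq> W \<Longrightarrow> is_assignment W (set_false M S)"
  unfolding is_assignment_def litvars_def set_false_def by auto

lemma set_false_set_true: "Neg ` M \<subseteq> S \<Longrightarrow> Pos ` M \<inter> S = {} \<Longrightarrow> set_false M (set_true M S) = S"
  unfolding set_true_def set_false_def by auto

lemma Var_restrict [simp]: "Var (restrict F A) = Var F - litvars A"
  by (simp add: restrict_def Var_def)

lemma Sat_restrict_is_assignment: "S \<in> Sat (restrict F A) \<Longrightarrow> is_assignment (Var F - litvars A) S"
  by (simp add: restrict_def Sat_def)

lemma restrict_empty: "(\<And>S. S \<in> Sat F \<Longrightarrow> is_assignment (Var F) S) \<Longrightarrow> restrict F {} = F"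
  unfolding restrict_def Var_def Sat_def by (auto simp: prod_eq_iff)

lemma restrict_restrict:
  assumes "lvar l \<in> Var (restrict F A)"
  shows "restrict (restrict F A) {l} = restrict F (A \<union> {l})"
proof -
  have l: "lvar l \<in> Var F - litvars A" using assms by simp
  have "Var F - litvars A - {lvar l} = Var F - litvars (A \<union> {l})" by auto
  moreover have "is_assignment (Var F - litvars A) (insert l S')"
    if "is_assignment (Var F - litvars A - {lvar l}) S'" for S'
    using is_assignment_insert[OF l] that by simp
  ultimately show ?thesis unfolding restrict_def Var_def Sat_def
    by (auto simp: Un_assoc)
qed

lemma finite_Sat_restrict: "finite (Var F) \<Longrightarrow> finite (Sat (restrict F A))"
  using finite_assignments[of "Var F - litvars A"] Sat_restrict_is_assignment
  by (metis (mono_tags, lifting) finite_Diff mem_Collect_eq rev_finite_subset subsetI)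

definition sat_with :: "'a bfun \<Rightarrow> 'a lit set \<Rightarrow> 'a lit \<Rightarrow> 'a lit set set" where
  "sat_with F A l = {S \<in> Sat (restrict F A). l \<in> S}"

lemma count_restrict_insert:
  assumes l: "lvar l \<in> Var (restrict F A)"
  shows "count (restrict F (A \<union> {l})) = card (sat_with F A l)"
proof -
  let ?G = "restrict F A"
  have sat: "Sat (restrict ?G {l}) =
      {S'. is_assignment (Var ?G - {lvar l}) S' \<and> insert l S' \<in> Sat ?G}"
    by (simp add: restrict_def Sat_def Var_def)
  have "bij_betw (insert l) (Sat (restrict ?G {l})) (sat_with F A l)"
  proof (rule bij_betw_byWitness[where f' = "\<lambda>S. S - {l}"])
    show "\<forall>S'\<in>Sat (restrict ?G {l}). insert l S' - {l} = S'"
      using is_assignment_lvar unfolding sat by fastforce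
    show "\<forall>S\<in>sat_with F A l. insert l (S - {l}) = S"
      by (auto simp: sat_with_def)
    show "insert l ` Sat (restrict ?G {l}) \<subseteq> sat_with F A l"
      unfolding sat sat_with_def by auto
    show "(\<lambda>S. S - {l}) ` sat_with F A l \<subseteq> Sat (restrict ?G {l})"
      unfolding sat sat_with_def
      using is_assignment_remove Sat_restrict_is_assignment by (fastforce simp: insert_absorb)
  qed
  then show ?thesis
    using restrict_restrict[OF l] by (simp add: count_def bij_betw_same_card)
qed

lemma count_restrict_split:
  assumes fin: "finite (Var F)" and x: "x \<in> Var (restrict F A)"
  shows "count (restrict F A) = card (sat_with F A (Pos x)) + card (sat_with F A (Neg x))"
proof -
  have asg: "is_assignment (Var F - litvars A) S" if "S \<in> Sat (restrict F A)" for S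
    using that by (rule Sat_restrict_is_assignment)
  have "finite (sat_with F A (Pos x))" "finite (sat_with F A (Neg x))"
    using finite_Sat_restrict[OF fin] by (simp_all add: sat_with_def)
  moreover have "Sat (restrict F A) = sat_with F A (Pos x) \<union> sat_with F A (Neg x)"
    and "sat_with F A (Pos x) \<inter> sat_with F A (Neg x) = {}"
    using is_assignment_Pos_neq_Neg[OF asg] x by (auto simp: sat_with_def)
  ultimately show ?thesis
    unfolding count_def by (metis card_Un_disjoint)
qed

lemma edge_weight_eq:
  assumes "finite (Var F)" "x \<in> Var (restrict F A)" "lvar l = x"
  shows "edge_weight F A l =
    card (sat_with F A l) / (card (sat_with F A (Pos x)) + card (sat_with F A (Neg x)))"
proof -
  have "count (restrict F (A \<union> {l})) = card (sat_with F A l)"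
    using count_restrict_insert assms(2,3) by blast
  then show ?thesis
    unfolding edge_weight_def count_restrict_split[OF assms(1,2)] by simp
qed

inductive_cases is_dtree_NodeE: "is_dtree F (Node x cp cn)"

lemma node_at_is_dtree:
  "node_at T A w \<Longrightarrow> is_dtree (restrict F {}) T \<Longrightarrow> w = Leaf \<or> is_dtree (restrict F A) w"
proof (induction rule: node_at.induct)
  case (pos T A x cp cn t)
  then have "is_dtree (restrict F A) (Node x cp cn)" by simp
  then show ?case
    using pos.hyps(2) restrict_restrict[of "Pos x" F A] by (auto elim: is_dtree_NodeE)
next
  case (neg T A x cp cn t)
  then have "is_dtree (restrict F A) (Node x cp cn)" by simp
  then show ?case
    using neg.hyps(2) restrict_restrict[of "Neg x" F A] by (auto elim: is_dtree_NodeE)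
qed simp

definition covers :: "'a set set \<Rightarrow> 'a lit set \<Rightarrow> bool" where
  "covers E S \<longleftrightarrow> (\<forall>e\<in>E. \<exists>v\<in>e. Pos v \<in> S)"

lemma covers_mono: "covers E S \<Longrightarrow> (\<And>v. Pos v \<in> S \<Longrightarrow> Pos v \<in> S') \<Longrightarrow> covers E S'"
  unfolding covers_def by blast

lemma Var_phi [simp]: "Var (phi V E) = V"
  by (simp add: phi_def Var_def)

lemma restrict_phi_empty: "restrict (phi V E) {} = phi V E"
  by (rule restrict_empty) (simp add: phi_def Sat_def Var_def)

lemma Sat_restrict_phi_iff:
  "S \<in> Sat (restrict (phi V E) A) \<longleftrightarrow>
     is_assignment (V - litvars A) S \<and> is_assignment V (A \<union> S) \<and> covers E (A \<union> S)"
  by (auto simp: restrict_def phi_def Sat_def Var_def covers_def)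

lemma Sat_restrict_phiI:
  assumes "S \<in> Sat (restrict (phi V E) A)"
    and "is_assignment (V - litvars A) S'" "covers E (A \<union> S')"
  shows "S' \<in> Sat (restrict (phi V E) A)"
proof -
  have "is_assignment (V - litvars A) S" "is_assignment V (A \<union> S)"
    using assms(1) by (simp_all add: Sat_restrict_phi_iff)
  then have "is_assignment V (A \<union> S')"
    using is_assignment_Un_cong assms(2) by blast
  then show ?thesis using assms(2,3) by (simp add: Sat_restrict_phi_iff)
qed

lemma card_sat_with_Neg_le_Pos:
  assumes fin: "finite V" and x: "x \<in> V - litvars A"
  shows "card (sat_with (phi V E) A (Neg x)) \<le> card (sat_with (phi V E) A (Pos x))"
proof (rule card_inj_on_le)
  let ?R = "restrict (phi V E) A"
  have Pos_notin: "Pos x \<notin> S" if "S \<in> sat_with (phi V E) A (Neg x)" for S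
    using that x is_assignment_Pos_neq_Neg[of "V - litvars A" S x]
    by (auto simp: sat_with_def Sat_restrict_phi_iff)
  show "inj_on (set_true {x}) (sat_with (phi V E) A (Neg x))"
  proof (rule inj_on_inverseI)
    fix S assume "S \<in> sat_with (phi V E) A (Neg x)"
    then show "set_false {x} (set_true {x} S) = S"
      using Pos_notin by (intro set_false_set_true) (auto simp: sat_with_def)
  qed
  show "set_true {x} ` sat_with (phi V E) A (Neg x) \<subseteq> sat_with (phi V E) A (Pos x)"
  proof clarify
    fix S assume S: "S \<in> sat_with (phi V E) A (Neg x)"
    then have "S \<in> Sat ?R" "is_assignment (V - litvars A) S" "covers E (A \<union> S)"
      by (simp_all add: sat_with_def Sat_restrict_phi_iff)
    moreover have "covers E (A \<union> set_true {x} S)"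
      using \<open>covers E (A \<union> S)\<close> by (rule covers_mono) auto
    ultimately have "set_true {x} S \<in> Sat ?R"
      using x by (blast intro: Sat_restrict_phiI is_assignment_set_true)
    then show "set_true {x} S \<in> sat_with (phi V E) A (Pos x)"
      by (simp add: sat_with_def)
  qed
  show "finite (sat_with (phi V E) A (Pos x))"
    using finite_Sat_restrict[of "phi V E"] fin by (simp add: sat_with_def)
qed

lemma simple_graph_edge_at:
  assumes "simple_graph V E" "e \<in> E" "x \<in> e"
  obtains z where "e = {x, z}" "z \<noteq> x" "z \<in> V"
  using assms unfolding simple_graph_def by (metis insert_commute insert_iff singletonD)

lemma Nu_subset:
  assumes "simple_graph V E"
  shows "Nu E A x \<subseteq> V - litvars A - {x}"
proof
  fix z assume "z \<in> Nu E A x"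
  then have "{x, z} \<in> E" "z \<notin> litvars A" by (simp_all add: Nu_def)
  moreover obtain z' where "{x, z} = {x, z'}" "z' \<noteq> x" "z' \<in> V"
    using simple_graph_edge_at[OF assms \<open>{x, z} \<in> E\<close>] by blast
  ultimately show "z \<in> V - litvars A - {x}" by (metis Diff_iff doubleton_eq_iff singletonD)
qed

lemma neighbour_true_or_in_Nu:
  assumes z: "{x, z} \<in> E" and x: "\<not> forced1 E A x"
    and asg: "is_assignment V (A \<union> S)" and cov: "covers E (A \<union> S)"
  shows "Pos z \<in> A \<union> S \<or> z \<in> Nu E A x"
proof (cases "z \<in> litvars A")
  case True
  then obtain l where "l \<in> A" "lvar l = z" unfolding litvars_def by blast
  moreover have "Neg z \<notin> A" using x z by (auto simp: forced1_def)
  ultimately show ?thesis by (cases l) auto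
next
  case zA: False
  show ?thesis
  proof (cases "forced1 E A z")
    case True
    then obtain w where w: "{z, w} \<in> E" "Neg w \<in> A" unfolding forced1_def by blast
    then have "w \<in> V" using is_assignment_lvar[OF asg, of "Neg w"] by simp
    then have "Pos w \<notin> A \<union> S" using is_assignment_Pos_neq_Neg[OF asg] w(2) by blast
    then show ?thesis using cov w(1) unfolding covers_def by fastforce
  next
    case False
    then show ?thesis using z zA by (simp add: Nu_def)
  qed
qed

lemma covers_set_false_set_true_Nu:
  assumes G: "simple_graph V E" and x: "\<not> forced1 E A x"
    and asg: "is_assignment V (A \<union> S)" and cov: "covers E (A \<union> S)"
  shows "covers E (A \<union> set_false {x} (set_true (Nu E A x) S))"
  unfolding covers_def
proof
  fix e assume e: "e \<in> E"
  show "\<exists>v\<in>e. Pos v \<in> A \<union> set_false {x} (set_true (Nu E A x) S)"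
  proof (cases "x \<in> e")
    case True
    then obtain z where "e = {x, z}" "z \<noteq> x" using simple_graph_edge_at[OF G e] by blast
    then show ?thesis using neighbour_true_or_in_Nu[OF _ x asg cov, of z] e by auto
  next
    case False
    then show ?thesis using cov e unfolding covers_def by fastforce
  qed
qed

lemma card_sat_with_Pos_le:
  assumes G: "simple_graph V E" and x: "x \<in> V - litvars A" and nf: "\<not> forced1 E A x"
  shows "card (sat_with (phi V E) A (Pos x))
    \<le> card (sat_with (phi V E) A (Neg x)) * 2 ^ card (Nu E A x)"
proof -
  let ?R = "restrict (phi V E) A" and ?W = "V - litvars A" and ?M = "Nu E A x"
  let ?P = "sat_with (phi V E) A (Pos x)" and ?N = "sat_with (phi V E) A (Neg x)"
  define g where "g S = set_false {x} (set_true ?M S)" for S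
  define h where "h S = (g S, {z \<in> ?M. Pos z \<in> S})" for S
  have finV: "finite V" using G by (simp add: simple_graph_def)
  have M: "?M \<subseteq> ?W" "x \<notin> ?M" using Nu_subset[OF G] by auto
  then have finM: "finite ?M" using finV finite_subset by blast
  have memP: "S \<in> Sat ?R \<and> is_assignment ?W S \<and> is_assignment V (A \<union> S)
      \<and> covers E (A \<union> S) \<and> Pos x \<in> S" if "S \<in> ?P" for S
    using that by (simp add: sat_with_def Sat_restrict_phi_iff)
  have "inj_on h ?P"
  proof (rule inj_onI)
    fix S1 S2 assume S: "S1 \<in> ?P" "S2 \<in> ?P" and "h S1 = h S2"
    then have g: "g S1 = g S2" and B: "{z \<in> ?M. Pos z \<in> S1} = {z \<in> ?M. Pos z \<in> S2}"
      by (simp_all add: h_def)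
    show "S1 = S2"
    proof (rule is_assignment_eqI)
      fix y
      have "Pos y \<in> g S1 \<longleftrightarrow> Pos y \<in> g S2" using g by simp
      then show "Pos y \<in> S1 \<longleftrightarrow> Pos y \<in> S2"
        using memP[OF S(1)] memP[OF S(2)] B by (auto simp: g_def)
    qed (use memP[OF S(1)] memP[OF S(2)] in blast)+
  qed
  moreover have "h ` ?P \<subseteq> ?N \<times> Pow ?M"
  proof (rule image_subsetI)
    fix S assume "S \<in> ?P"
    note S = memP[OF this]
    have "is_assignment ?W (g S)"
      unfolding g_def using S M x by (intro is_assignment_set_false is_assignment_set_true) auto
    moreover have "covers E (A \<union> g S)"
      unfolding g_def using covers_set_false_set_true_Nu[OF G nf] S by blast
    ultimately have "g S \<in> Sat ?R" using S by (blast intro: Sat_restrict_phiI)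
    then show "h S \<in> ?N \<times> Pow ?M" by (auto simp: h_def g_def sat_with_def)
  qed
  moreover have "finite ?N"
    using finite_Sat_restrict[of "phi V E"] finV by (simp add: sat_with_def)
  ultimately have "card ?P \<le> card (?N \<times> Pow ?M)"
    using finM by (intro card_inj_on_le) auto
  then show ?thesis using finM by (simp add: card_cartesian_product card_Pow)
qed

lemma ratio_bounds:
  fixes n p k :: nat
  assumes np: "n \<le> p" and pn: "p \<le> n * 2 ^ k" and pos: "0 < p + n"
  shows "(1/2) ^ (k + 1) \<le> real n / (p + n)" "real n / (p + n) \<le> 1/2"
    "1/2 \<le> real p / (p + n)" "real p / (p + n) \<le> 1 - (1/2) ^ (k + 1)"
proof -
  have pos': "real p + real n > 0" using pos by linarith
  have "real p \<le> real n * 2 ^ k" using pn by (metis of_nat_le_iff of_nat_mult of_nat_numeral of_nat_power)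
  moreover have "real n \<le> real p" using np by simp
  ultimately have "real p + real n \<le> real n * 2 ^ (k + 1)" by simp
  then show lower: "(1/2) ^ (k + 1) \<le> real n / (p + n)"
    using pos' by (simp add: field_simps power_divide)
  show upper: "real n / (p + n) \<le> 1/2" using pos' np by (simp add: field_simps)
  have "real p / (p + n) = 1 - real n / (p + n)" using pos' by (simp add: field_simps)
  then show "1/2 \<le> real p / (p + n)" "real p / (p + n) \<le> 1 - (1/2) ^ (k + 1)"
    using lower upper by linarith+
qed

theorem lemma11:
  fixes V :: "'a set" and E :: "'a set set" and T :: "'a dtree"
    and A :: "'a lit set" and x :: 'a and cp cn :: "'a dtree option"
  assumes "simple_graph V E"
    and "no_isolated V E"
    and "is_dtree (phi V E) T"
    and "node_at T A (Node x cp cn)"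
    and "\<not> forced1 E A x"
  shows "cp \<noteq> None \<and> cn \<noteq> None
    \<and> (1/2) ^ (card (Nu E A x) + 1) \<le> edge_weight (phi V E) A (Neg x)
    \<and> edge_weight (phi V E) A (Neg x) \<le> 1/2
    \<and> 1/2 \<le> edge_weight (phi V E) A (Pos x)
    \<and> edge_weight (phi V E) A (Pos x) \<le> 1 - (1/2) ^ (card (Nu E A x) + 1)"
proof -
  let ?P = "sat_with (phi V E) A (Pos x)" and ?N = "sat_with (phi V E) A (Neg x)"
  have finV: "finite (Var (phi V E))" using assms(1) by (simp add: simple_graph_def)
  have "Node x cp cn = Leaf \<or> is_dtree (restrict (phi V E) A) (Node x cp cn)"
    using node_at_is_dtree[OF assms(4)] assms(3) by (simp add: restrict_phi_empty)
  then have ne: "Sat (restrict (phi V E) A) \<noteq> {}" and x: "x \<in> Var (restrict (phi V E) A)"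
    and children: "cp \<noteq> None \<longleftrightarrow> ?P \<noteq> {}" "cn \<noteq> None \<longleftrightarrow> ?N \<noteq> {}"
    by (auto elim!: is_dtree_NodeE simp: sat_with_def)
  have xW: "x \<in> V - litvars A" using x by simp
  have NP: "card ?N \<le> card ?P"
    using card_sat_with_Neg_le_Pos xW finV by simp
  have PN: "card ?P \<le> card ?N * 2 ^ card (Nu E A x)"
    using card_sat_with_Pos_le[OF assms(1) xW assms(5)] .
  have "0 < count (restrict (phi V E) A)"
    using ne finite_Sat_restrict[OF finV] by (simp add: count_def card_gt_0_iff)
  then have pos: "0 < card ?P + card ?N" using count_restrict_split[OF finV x] by simp
  then have "?P \<noteq> {}" "?N \<noteq> {}" using NP PN by auto
  then show ?thesis
    using children ratio_bounds[OF NP PN pos] edge_weight_eq[OF finV x] by simp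
qed

end
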